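(* Let $n$ be a nonnegative integer and $a,c\in\mathbb{C}$ such that all series below are defined (no lower parameter zero or a negative integer). Then \[ {}_3F_2\!\left(\left.{-n,\frac{a}{2},\frac{a+1}{2} \atop a,c}\right| 4\right) =(-1)^n\,{}_3F_2\!\left(\left.{-n,\frac{2c-a-n-1}{2},\frac{2c-a-n}{2} \atop 2c-a-n-1,c}\right| 4\right). \] Equivalently, with $Q_n(a,c)=(1+a-c)_n(c)_n\,{}_3F_2\!\left(\left.{-n,\frac{a}{2},\frac{a+1}{2} \atop a,c}\right| 4\right)$ one has $Q_n(a,c)=Q_n(2c-a-n-1,c)$, and the function $W_n(x,y)=Q_n\!\left(x,\frac{1+x+y+n}{2}\right)$ satisfies $W_n(x,y)=W_n(y,x)$.
   Context: For $a\in\mathbb{C}$, $(a)_0=1$ and $(a)_k=a(a+1)\cdots(a+k-1)$ for $k\ge1$. The hypergeometric series is ${}_rF_s\!\left(\left.{\alpha_1,\ldots,\alpha_r\atop \beta_1,\ldots,\beta_s}\right|z\right)=\sum_{k\ge0}\frac{(\alpha_1)_k\cdots(\alpha_r)_k}{k!(\beta_1)_k\cdots(\beta_s)_k}z^k$, with no lower parameter zero or a negative integer; when an upper parameter is $-n$ it is a finite sum over $0\le k\le n$. *)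

theory Defs
  imports Complex_Main
begin

text \<open>When an upper
parameter is a nonpositive integer -n, all terms with k > n vanish, so this is
the finite sum over 0 \<le> k \<le> n.\<close>

definition hyperg :: "complex list \<Rightarrow> complex list \<Rightarrow> complex \<Rightarrow> complex" where
  "hyperg as bs z =
     (\<Sum>k. (\<Prod>a\<leftarrow>as. pochhammer a k) /
            (fact k * (\<Prod>b\<leftarrow>bs. pochhammer b k)) * z ^ k)"

end

theory Submission
  imports Defs
begin

(* Since (-n)_k / k! = (-1)^k binom(n,k), 4^k (a/2)_k ((a+1)/2)_k = (a)_(2k) and
   (c)_n / (c)_k = (c+k)_(n-k), clearing the denominator (c)_n turns the left-hand side into
   the polynomial P_n(a,c) = sum_k (-1)^k binom(n,k) (a+k)_k (c+k)_(n-k).  Pascal's rule gives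
   the recurrence P_(n+1)(a,c) = (c+n) P_n(a,c) - 2(c+n) P_n(a+1,c) - (1+a-2c) P_n(a+1,c+1),
   and any family with P_0 = 1 satisfying it obeys, by induction on n, first a contiguous
   relation and then the reflection P_n(a,c) = (-1)^n P_n(2c-a-n-1,c); dividing by (c)_n
   again gives the theorem. *)

lemma pochhammer_minus_of_nat:
  "pochhammer (- of_nat n :: 'a::field_char_0) k = (-1) ^ k * of_nat (n choose k) * fact k"
  by (simp add: pochhammer_minus binomial_gbinomial gbinomial_pochhammer')

lemma pochhammer_halves:
  fixes x :: "'a::field_char_0"
  shows "4 ^ k * pochhammer (x / 2) k * pochhammer ((x + 1) / 2) k = pochhammer x k * pochhammer (x + of_nat k) k"
proof -
  have "pochhammer x k * pochhammer (x + of_nat k) k = pochhammer (2 * (x / 2)) (2 * k)"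
    unfolding mult_2[of k] by (simp add: pochhammer_product')
  also have "\<dots> = of_nat (2 ^ (2 * k)) * pochhammer (x / 2) k * pochhammer (x / 2 + 1 / 2) k"
    by (rule pochhammer_double)
  also have "(of_nat (2 ^ (2 * k)) :: 'a) = 4 ^ k"
    by (simp add: power_mult)
  also have "x / 2 + 1 / 2 = (x + 1) / 2"
    by (simp add: add_divide_distrib)
  finally show ?thesis ..
qed

lemma sum_binomial_Suc:
  fixes f :: "nat \<Rightarrow> 'a::comm_semiring_1"
  shows "(\<Sum>k\<le>Suc n. of_nat (Suc n choose k) * f k) = (\<Sum>k\<le>n. of_nat (n choose k) * (f k + f (Suc k)))"
proof -
  have lower: "(\<Sum>k\<le>n. of_nat (n choose k) * f k) = f 0 + (\<Sum>k\<le>n. of_nat (n choose Suc k) * f (Suc k))"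
  proof -
    have "(\<Sum>k\<le>n. of_nat (n choose k) * f k) = (\<Sum>k\<le>Suc n. of_nat (n choose k) * f k)"
      by (simp add: binomial_eq_0)
    then show ?thesis
      by (simp only: sum.atMost_Suc_shift) simp
  qed
  have "(\<Sum>k\<le>Suc n. of_nat (Suc n choose k) * f k)
      = f 0 + (\<Sum>k\<le>n. of_nat (n choose k) * f (Suc k)) + (\<Sum>k\<le>n. of_nat (n choose Suc k) * f (Suc k))"
    by (simp only: sum.atMost_Suc_shift binomial_Suc_Suc) (simp add: sum.distrib algebra_simps)
  also have "\<dots> = (\<Sum>k\<le>n. of_nat (n choose k) * (f k + f (Suc k)))"
    by (simp only: lower sum.distrib distrib_left add_ac)
  finally show ?thesis .
qed

locale hyperg_recurrence =
  fixes P :: "nat \<Rightarrow> 'a::idom \<Rightarrow> 'a \<Rightarrow> 'a"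
  assumes P_0: "P 0 a c = 1"
    and P_Suc: "P (Suc n) a c = (c + of_nat n) * P n a c - 2 * (c + of_nat n) * P n (a + 1) c
      - (1 + a - 2 * c) * P n (a + 1) (c + 1)"
begin

lemma contiguous:
  "(c + of_nat n) * (P n (a + 1) c + P n a c) - (2 * c - 1 - a) * P n (a + 1) (c + 1)
     - (1 + a + of_nat n) * P n (a + 2) (c + 1) = 0"
proof (induction n arbitrary: a c)
  case 0
  show ?case by (simp add: P_0 algebra_simps)
next
  case (Suc n)
  have "(c + of_nat (Suc n)) * (P (Suc n) (a + 1) c + P (Suc n) a c)
     - (2 * c - 1 - a) * P (Suc n) (a + 1) (c + 1) - (1 + a + of_nat (Suc n)) * P (Suc n) (a + 2) (c + 1)
     = (c + of_nat (Suc n)) * ((c + of_nat n) * (P n (a + 1) c + P n a c)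
         - (2 * c - 1 - a) * P n (a + 1) (c + 1) - (1 + a + of_nat n) * P n (a + 2) (c + 1))
     - 2 * (c + of_nat (Suc n)) * ((c + of_nat n) * (P n (a + 1 + 1) c + P n (a + 1) c)
         - (2 * c - 1 - (a + 1)) * P n (a + 1 + 1) (c + 1) - (1 + (a + 1) + of_nat n) * P n (a + 1 + 2) (c + 1))
     + (2 * c - a - 1) * ((c + 1 + of_nat n) * (P n (a + 1 + 1) (c + 1) + P n (a + 1) (c + 1))
         - (2 * (c + 1) - 1 - (a + 1)) * P n (a + 1 + 1) (c + 1 + 1)
         - (1 + (a + 1) + of_nat n) * P n (a + 1 + 2) (c + 1 + 1))"
  proof -
    \<comment> \<open>\<open>algebra\<close> treats the values of P as atoms, so their arguments must match syntactically\<close>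
    have args: "a + 1 + 1 = a + 2" "a + 2 + 1 = a + 1 + 2"
      by simp_all
    show ?thesis
      unfolding P_Suc of_nat_Suc args by algebra
  qed
  also have "\<dots> = 0"
    by (simp only: Suc.IH) simp
  finally show ?case .
qed

lemma reflect: "P n a c = (-1) ^ n * P n (2 * c - of_nat n - 1 - a) c"
proof (induction n arbitrary: a c)
  case 0
  show ?case by (simp add: P_0)
next
  case (Suc n)
  define b where "b = 2 * c - of_nat (Suc n) - 1 - a"
  have IH1: "P n b c = (-1) ^ n * P n (a + 1) c"
    using Suc.IH[of b c] by (simp add: b_def algebra_simps)
  have IH2: "P n (b + 1) c = (-1) ^ n * P n a c"
    using Suc.IH[of "b + 1" c] by (simp add: b_def algebra_simps)
  have IH3: "P n (b + 1) (c + 1) = (-1) ^ n * P n (a + 2) (c + 1)"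
    using Suc.IH[of "b + 1" "c + 1"] by (simp add: b_def algebra_simps)
  have sign: "(-1) ^ Suc n * (-1) ^ n = (-1 :: 'a)"
    by (simp flip: power_add)
  have "(-1) ^ Suc n * P (Suc n) b c
      = (-1) ^ Suc n * (-1) ^ n * ((c + of_nat n) * P n (a + 1) c - 2 * (c + of_nat n) * P n a c
         - (1 + b - 2 * c) * P n (a + 2) (c + 1))"
    by (simp only: P_Suc IH1 IH2 IH3) (simp add: algebra_simps)
  also have "\<dots> = P (Suc n) a c"
    using contiguous[of c n a] by (simp add: sign P_Suc b_def algebra_simps)
  finally show ?case by (simp add: b_def)
qed

end

definition hyperg_poly_term :: "nat \<Rightarrow> complex \<Rightarrow> complex \<Rightarrow> nat \<Rightarrow> complex" where
  "hyperg_poly_term n a c k = (-1) ^ k * pochhammer (a + of_nat k) k * pochhammer (c + of_nat k) (n - k)"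

definition hyperg_poly :: "nat \<Rightarrow> complex \<Rightarrow> complex \<Rightarrow> complex" where
  "hyperg_poly n a c = (\<Sum>k\<le>n. of_nat (n choose k) * hyperg_poly_term n a c k)"

lemma hyperg_poly_term_Suc:
  assumes "k \<le> n"
  shows "hyperg_poly_term (Suc n) a c k + hyperg_poly_term (Suc n) a c (Suc k)
    = (c + of_nat n) * hyperg_poly_term n a c k - 2 * (c + of_nat n) * hyperg_poly_term n (a + 1) c k
      - (1 + a - 2 * c) * hyperg_poly_term n (a + 1) (c + 1) k"
proof -
  define A0 where "A0 = pochhammer (a + of_nat k) k"
  define A1 where "A1 = pochhammer (a + 1 + of_nat k) k"
  define C0 where "C0 = pochhammer (c + of_nat k) (n - k)"
  define C1 where "C1 = pochhammer (c + 1 + of_nat k) (n - k)"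
  have C_last: "pochhammer (c + of_nat k) (Suc n - k) = (c + of_nat n) * C0"
    using assms by (simp add: C0_def Suc_diff_le pochhammer_rec' of_nat_diff)
  have C_first: "pochhammer (c + of_nat k) (Suc n - k) = (c + of_nat k) * C1"
    using assms by (simp add: C1_def Suc_diff_le pochhammer_rec add_ac)
  have A_Suc: "pochhammer (a + of_nat (Suc k)) (Suc k) = (a + 1 + 2 * of_nat k) * A1"
    by (simp add: A1_def pochhammer_rec' algebra_simps)
  have C_Suc: "pochhammer (c + of_nat (Suc k)) (Suc n - Suc k) = C1"
    by (simp add: C1_def add_ac)
  have "hyperg_poly_term (Suc n) a c k + hyperg_poly_term (Suc n) a c (Suc k)
      = (-1) ^ k * ((c + of_nat n) * A0 * C0 - (a + 1 + 2 * of_nat k) * A1 * C1)"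
    unfolding hyperg_poly_term_def
    by (simp only: C_last C_Suc A_Suc flip: A0_def) (simp add: algebra_simps)
  also have "\<dots> = (-1) ^ k * ((c + of_nat n) * A0 * C0 - A1 * ((a + 1 + 2 * of_nat k) * C1))"
    by (simp add: mult_ac)
  also have "(a + 1 + 2 * of_nat k) * C1 = 2 * ((c + of_nat n) * C0) + (1 + a - 2 * c) * C1"
  proof -
    have "(a + 1 + 2 * of_nat k) * C1 = 2 * ((c + of_nat k) * C1) + (1 + a - 2 * c) * C1"
      by (simp add: algebra_simps)
    also have "(c + of_nat k) * C1 = (c + of_nat n) * C0"
      using C_last C_first by simp
    finally show ?thesis .
  qed
  finally show ?thesis
    by (simp add: hyperg_poly_term_def A0_def A1_def C0_def C1_def algebra_simps)
qed

lemma hyperg_poly_Suc: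
  "hyperg_poly (Suc n) a c = (c + of_nat n) * hyperg_poly n a c - 2 * (c + of_nat n) * hyperg_poly n (a + 1) c
     - (1 + a - 2 * c) * hyperg_poly n (a + 1) (c + 1)"
proof -
  have "hyperg_poly (Suc n) a c
      = (\<Sum>k\<le>n. of_nat (n choose k) * (hyperg_poly_term (Suc n) a c k + hyperg_poly_term (Suc n) a c (Suc k)))"
    unfolding hyperg_poly_def by (rule sum_binomial_Suc)
  also have "\<dots> = (\<Sum>k\<le>n. (c + of_nat n) * (of_nat (n choose k) * hyperg_poly_term n a c k)
      - 2 * (c + of_nat n) * (of_nat (n choose k) * hyperg_poly_term n (a + 1) c k)
      - (1 + a - 2 * c) * (of_nat (n choose k) * hyperg_poly_term n (a + 1) (c + 1) k))"
    by (intro sum.cong refl) (simp add: hyperg_poly_term_Suc algebra_simps)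
  finally show ?thesis
    by (simp add: hyperg_poly_def sum_subtractf sum_distrib_left)
qed

interpretation hyperg_poly: hyperg_recurrence hyperg_poly
proof
  show "hyperg_poly 0 a c = 1" for a c
    by (simp add: hyperg_poly_def hyperg_poly_term_def)
qed (rule hyperg_poly_Suc)

lemma hyperg_eq_hyperg_poly:
  assumes x: "\<forall>m::nat. x \<noteq> - of_nat m" and c: "\<forall>m::nat. c \<noteq> - of_nat m"
  shows "hyperg [- of_nat n, x / 2, (x + 1) / 2] [x, c] 4 = hyperg_poly n x c / pochhammer c n"
proof -
  define f where "f k = pochhammer (- of_nat n) k * (pochhammer (x / 2) k * pochhammer ((x + 1) / 2) k)
      / (fact k * (pochhammer x k * pochhammer c k)) * 4 ^ k" for k
  have "hyperg [- of_nat n, x / 2, (x + 1) / 2] [x, c] 4 = (\<Sum>k. f k)"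
    unfolding hyperg_def f_def by simp
  also have "\<dots> = (\<Sum>k\<le>n. f k)"
    by (rule suminf_finite) (auto simp: f_def pochhammer_of_nat_eq_0_iff)
  also have "\<dots> = (\<Sum>k\<le>n. of_nat (n choose k) * hyperg_poly_term n x c k / pochhammer c n)"
  proof (intro sum.cong refl)
    fix k assume "k \<in> {..n}"
    then have c_split: "pochhammer c n = pochhammer c k * pochhammer (c + of_nat k) (n - k)"
      by (simp add: pochhammer_product)
    have x_k: "pochhammer x k \<noteq> 0"
      using x by (auto simp: pochhammer_eq_0_iff)
    have "pochhammer c n \<noteq> 0"
      using c by (auto simp: pochhammer_eq_0_iff)
    then have c_k: "pochhammer c k \<noteq> 0" "pochhammer (c + of_nat k) (n - k) \<noteq> 0"
      by (auto simp: c_split)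
    have "f k = pochhammer (- of_nat n) k * (4 ^ k * pochhammer (x / 2) k * pochhammer ((x + 1) / 2) k)
        / (fact k * (pochhammer x k * pochhammer c k))"
      by (simp add: f_def field_simps)
    also have "\<dots> = (-1) ^ k * of_nat (n choose k) * fact k * (pochhammer x k * pochhammer (x + of_nat k) k)
        / (fact k * (pochhammer x k * pochhammer c k))"
      by (simp only: pochhammer_minus_of_nat pochhammer_halves)
    also have "\<dots> = (-1) ^ k * of_nat (n choose k) * pochhammer (x + of_nat k) k / pochhammer c k"
      using x_k by simp
    also have "\<dots> = of_nat (n choose k) * hyperg_poly_term n x c k / pochhammer c n"
      using c_k by (simp add: hyperg_poly_term_def c_split field_simps)
    finally show "f k = \<dots>" .
  qed
  also have "\<dots> = hyperg_poly n x c / pochhammer c n"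
    by (simp add: hyperg_poly_def sum_divide_distrib)
  finally show ?thesis .
qed

theorem mainTheorem8:
  fixes n :: nat and a c :: complex
  assumes "\<forall>m::nat. a \<noteq> - of_nat m"
      and "\<forall>m::nat. c \<noteq> - of_nat m"
      and "\<forall>m::nat. 2 * c - a - of_nat n - 1 \<noteq> - of_nat m"
  shows "hyperg [- of_nat n, a / 2, (a + 1) / 2] [a, c] 4 =
         (-1) ^ n * hyperg [- of_nat n, (2 * c - a - of_nat n - 1) / 2, (2 * c - a - of_nat n) / 2]
                           [2 * c - a - of_nat n - 1, c] 4"
proof -
  let ?b = "2 * c - a - of_nat n - 1"
  have "hyperg [- of_nat n, a / 2, (a + 1) / 2] [a, c] 4 = hyperg_poly n a c / pochhammer c n"
    using assms(1,2) by (rule hyperg_eq_hyperg_poly)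
  also have "hyperg_poly n a c = (-1) ^ n * hyperg_poly n ?b c"
    using hyperg_poly.reflect[of n a c] by (simp add: algebra_simps)
  also have "(-1) ^ n * hyperg_poly n ?b c / pochhammer c n
      = (-1) ^ n * hyperg [- of_nat n, ?b / 2, (?b + 1) / 2] [?b, c] 4"
    using hyperg_eq_hyperg_poly[OF assms(3,2)] by simp
  also have "?b + 1 = 2 * c - a - of_nat n"
    by simp
  finally show ?thesis .
qed

end
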